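(* Suppose the user paths $p_1,\dots,p_k$ are pairwise edge-disjoint. Then the set function $A\mapsto\Lambda(A,P)$ on $2^E$ is (1) monotone: $\Lambda(A,P)\le\Lambda(B,P)$ whenever $A\subseteq B\subseteq E$; and (2) submodular: for all $A\subseteq B\subseteq E$ and $e\in E$, $\Lambda(A\cup\{e\},P)-\Lambda(A,P)\ge\Lambda(B\cup\{e\},P)-\Lambda(B,P)$.
   Context: $G=(V,E)$ is a simple directed acyclic graph with capacities $C\in\mathbb{R}_{\ge0}^E$, and $\gamma$ is a budget with $0<\gamma\le\min_eC(e)$. User paths $P=\{p_1,\dots,p_k\}$ are directed paths in $G$ (viewed as edge sets) with initial flow values $\lambda_i\ge0$ such that $\sum_{i:e\in p_i}\lambda_i\le C(e)$ for all $e$. For $A\subseteq E$ let $\tilde C_A(e)=C(e)-\gamma\cdot\mathbf{1}_{\{e\in A\}}$, let $T(A,P)$ be the optimal value of: maximize $\sum_i\tilde\lambda_i$ s.t. $\sum_{i:e\in p_i}\tilde\lambda_i\le\tilde C_A(e)$ for all $e\in E$, $0\le\tilde\lambda_i\le\lambda_i$; and $\Lambda(A,P)=\sum_i\lambda_i-T(A,P)$. *)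

theory Defs
  imports "HOL-Analysis.Analysis"
begin

(* A directed graph is given by a finite edge set E of ordered vertex pairs
   (simple: no parallel edges by construction; acyclic via 'acyclic E'). *)

definition is_dpath :: "('v \<times> 'v) set \<Rightarrow> ('v \<times> 'v) set \<Rightarrow> bool" where
  "is_dpath E p \<longleftrightarrow> (\<exists>vs. length vs \<ge> 2 \<and> distinct vs \<and>
      (\<forall>j < length vs - 1. (vs ! j, vs ! Suc j) \<in> E) \<and>
      p = {(vs ! j, vs ! Suc j) | j. j < length vs - 1})"

definition red_cap :: "('v \<times> 'v \<Rightarrow> real) \<Rightarrow> real \<Rightarrow> ('v \<times> 'v) set \<Rightarrow> ('v \<times> 'v) \<Rightarrow> real" where
  "red_cap C \<gamma> A e = C e - \<gamma> * (if e \<in> A then 1 else 0)"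

definition feasible_flow ::
  "('v \<times> 'v) set \<Rightarrow> ('v \<times> 'v \<Rightarrow> real) \<Rightarrow> real \<Rightarrow> nat \<Rightarrow> (nat \<Rightarrow> ('v \<times> 'v) set)
    \<Rightarrow> (nat \<Rightarrow> real) \<Rightarrow> ('v \<times> 'v) set \<Rightarrow> (nat \<Rightarrow> real) \<Rightarrow> bool" where
  "feasible_flow E C \<gamma> k p lam A fl \<longleftrightarrow>
     (\<forall>e \<in> E. (\<Sum>i \<in> {i. i < k \<and> e \<in> p i}. fl i) \<le> red_cap C \<gamma> A e) \<and>
     (\<forall>i < k. 0 \<le> fl i \<and> fl i \<le> lam i)"

(* T(A,P): optimal value of the LP (its supremum, which is attained) *)
definition T_val ::
  "('v \<times> 'v) set \<Rightarrow> ('v \<times> 'v \<Rightarrow> real) \<Rightarrow> real \<Rightarrow> nat \<Rightarrow> (nat \<Rightarrow> ('v \<times> 'v) set)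
    \<Rightarrow> (nat \<Rightarrow> real) \<Rightarrow> ('v \<times> 'v) set \<Rightarrow> real" where
  "T_val E C \<gamma> k p lam A = Sup {(\<Sum>i<k. fl i) | fl. feasible_flow E C \<gamma> k p lam A fl}"

definition Lambda_val ::
  "('v \<times> 'v) set \<Rightarrow> ('v \<times> 'v \<Rightarrow> real) \<Rightarrow> real \<Rightarrow> nat \<Rightarrow> (nat \<Rightarrow> ('v \<times> 'v) set)
    \<Rightarrow> (nat \<Rightarrow> real) \<Rightarrow> ('v \<times> 'v) set \<Rightarrow> real" where
  "Lambda_val E C \<gamma> k p lam A = (\<Sum>i<k. lam i) - T_val E C \<gamma> k p lam A"

end

theory Submission
  imports Defs
begin

text \<open>Edge-disjointness decouples the linear program: every edge constraint involves at most one
  user, so user \<open>i\<close> can independently keep \<open>min(\<lambda>\<^sub>i, min {C e - \<gamma> | e \<in> p\<^sub>i \<inter> A})\<close>.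
  As \<open>\<lambda>\<^sub>i \<le> C e\<close> along \<open>p\<^sub>i\<close>, the loss of user \<open>i\<close> is the maximum of \<open>0\<close> and the weights
  \<open>\<lambda>\<^sub>i - C e + \<gamma>\<close> of the edges in \<open>p\<^sub>i \<inter> A\<close>. Such a maximum is monotone and submodular in \<open>A\<close>,
  because \<open>max a x - x\<close> is antitone in \<open>x\<close>, and so is the sum \<open>\<Lambda>\<close> of these losses.\<close>

definition Max0 :: "('a \<Rightarrow> 'b::linordered_ab_group_add) \<Rightarrow> 'a set \<Rightarrow> 'b" where
  "Max0 w S = Max (insert 0 (w ` S))"

lemma Max0_nonneg: "finite S \<Longrightarrow> 0 \<le> Max0 w S"
  unfolding Max0_def by simp

lemma Max0_ge: "finite S \<Longrightarrow> x \<in> S \<Longrightarrow> w x \<le> Max0 w S"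
  unfolding Max0_def by simp

lemma Max0_least: "finite S \<Longrightarrow> 0 \<le> c \<Longrightarrow> (\<And>x. x \<in> S \<Longrightarrow> w x \<le> c) \<Longrightarrow> Max0 w S \<le> c"
  unfolding Max0_def by auto

lemma Max0_mono: "finite T \<Longrightarrow> S \<subseteq> T \<Longrightarrow> Max0 w S \<le> Max0 w T"
  unfolding Max0_def by (rule Max_mono) auto

lemma Max0_insert: "finite S \<Longrightarrow> Max0 w (insert x S) = max (w x) (Max0 w S)"
  unfolding Max0_def using Max_insert[of "insert 0 (w ` S)" "w x"] by (simp add: insert_commute)

lemma Max0_submodular:
  assumes "finite T" and "S \<subseteq> T"
  shows "Max0 w (insert x T) - Max0 w T \<le> Max0 w (insert x S) - Max0 w S"
proof -
  have "Max0 w S \<le> Max0 w T" using assms by (rule Max0_mono)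
  moreover have "finite S" using assms finite_subset by blast
  ultimately show ?thesis using assms(1) by (auto simp: Max0_insert max_def algebra_simps)
qed

lemma is_dpath_subset: "is_dpath E p \<Longrightarrow> p \<subseteq> E"
  unfolding is_dpath_def by auto

locale disjoint_paths_network =
  fixes E :: "('v \<times> 'v) set" and C :: "'v \<times> 'v \<Rightarrow> real" and \<gamma> :: real
    and k :: nat and p :: "nat \<Rightarrow> ('v \<times> 'v) set" and lam :: "nat \<Rightarrow> real"
  assumes finite_E: "finite E"
    and cap_nonneg: "e \<in> E \<Longrightarrow> 0 \<le> C e"
    and gamma_le_cap: "e \<in> E \<Longrightarrow> \<gamma> \<le> C e"
    and paths_in_E: "i < k \<Longrightarrow> p i \<subseteq> E"
    and lam_nonneg: "i < k \<Longrightarrow> 0 \<le> lam i"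
    and lam_feasible: "e \<in> E \<Longrightarrow> (\<Sum>i \<in> {i. i < k \<and> e \<in> p i}. lam i) \<le> C e"
    and paths_disjoint: "i < k \<Longrightarrow> j < k \<Longrightarrow> i \<noteq> j \<Longrightarrow> p i \<inter> p j = {}"
begin

lemma finite_path: "i < k \<Longrightarrow> finite (p i)"
  using paths_in_E finite_E finite_subset by blast

lemma users_on_path_edge: "i < k \<Longrightarrow> e \<in> p i \<Longrightarrow> {j. j < k \<and> e \<in> p j} = {i}"
  using paths_disjoint by blast

lemma lam_le_cap: "i < k \<Longrightarrow> e \<in> p i \<Longrightarrow> lam i \<le> C e"
  using lam_feasible[of e] users_on_path_edge[of i e] paths_in_E by auto

lemma feasible_flow_le_red_cap:
  "feasible_flow E C \<gamma> k p lam A fl \<Longrightarrow> i < k \<Longrightarrow> e \<in> p i \<Longrightarrow> fl i \<le> red_cap C \<gamma> A e"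
  using users_on_path_edge[of i e] paths_in_E unfolding feasible_flow_def by fastforce

definition loss :: "('v \<times> 'v) set \<Rightarrow> nat \<Rightarrow> real" where
  "loss A i = Max0 (\<lambda>e. lam i - (C e - \<gamma>)) (p i \<inter> A)"

lemma loss_nonneg: "i < k \<Longrightarrow> 0 \<le> loss A i"
  unfolding loss_def using finite_path by (simp add: Max0_nonneg)

lemma loss_le_lam: "i < k \<Longrightarrow> loss A i \<le> lam i"
  unfolding loss_def using finite_path paths_in_E gamma_le_cap lam_nonneg
  by (intro Max0_least) force+

lemma feasible_flow_minus_loss: "feasible_flow E C \<gamma> k p lam A (\<lambda>i. lam i - loss A i)"
  unfolding feasible_flow_def
proof (intro conjI ballI allI impI)
  fix e assume "e \<in> E"
  show "(\<Sum>i \<in> {i. i < k \<and> e \<in> p i}. lam i - loss A i) \<le> red_cap C \<gamma> A e"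
  proof (cases "\<exists>i<k. e \<in> p i")
    case True
    then obtain i where i: "i < k" "e \<in> p i" by blast
    have "lam i - (C e - \<gamma>) \<le> loss A i" if "e \<in> A"
      unfolding loss_def using that i finite_path by (intro Max0_ge) auto
    then have "lam i - loss A i \<le> red_cap C \<gamma> A e"
      using lam_le_cap[OF i] loss_nonneg[OF i(1), of A] unfolding red_cap_def by auto
    then show ?thesis using users_on_path_edge[OF i] by simp
  next
    case False
    then have no_users: "{i. i < k \<and> e \<in> p i} = {}" by blast
    show ?thesis
      using cap_nonneg[OF \<open>e \<in> E\<close>] gamma_le_cap[OF \<open>e \<in> E\<close>]
      unfolding red_cap_def no_users by simp
  qed
qed (use loss_nonneg loss_le_lam in auto)

lemma feasible_flow_le_lam_minus_loss:
  assumes fl: "feasible_flow E C \<gamma> k p lam A fl" and i: "i < k"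
  shows "fl i \<le> lam i - loss A i"
proof -
  have "lam i - (C e - \<gamma>) \<le> lam i - fl i" if "e \<in> p i \<inter> A" for e
    using feasible_flow_le_red_cap[OF fl i, of e] that unfolding red_cap_def by simp
  moreover have "0 \<le> lam i - fl i" using fl i unfolding feasible_flow_def by auto
  ultimately have "loss A i \<le> lam i - fl i"
    unfolding loss_def using finite_path[OF i] by (intro Max0_least) auto
  then show ?thesis by simp
qed

lemma T_val_eq: "T_val E C \<gamma> k p lam A = (\<Sum>i<k. lam i - loss A i)"
  unfolding T_val_def
  using feasible_flow_minus_loss feasible_flow_le_lam_minus_loss
  by (intro cSup_eq_maximum) (auto intro!: sum_mono)

lemma Lambda_val_eq_sum_loss: "Lambda_val E C \<gamma> k p lam A = (\<Sum>i<k. loss A i)"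
  unfolding Lambda_val_def T_val_eq by (simp add: sum_subtractf)

lemma Lambda_val_mono:
  "A \<subseteq> B \<Longrightarrow> Lambda_val E C \<gamma> k p lam A \<le> Lambda_val E C \<gamma> k p lam B"
  unfolding Lambda_val_eq_sum_loss loss_def
  using finite_path by (intro sum_mono Max0_mono) auto

lemma loss_submodular:
  assumes "A \<subseteq> B" and "i < k"
  shows "loss (B \<union> {e}) i - loss B i \<le> loss (A \<union> {e}) i - loss A i"
proof (cases "e \<in> p i")
  case True
  then have "p i \<inter> (X \<union> {e}) = insert e (p i \<inter> X)" for X by auto
  then show ?thesis
    unfolding loss_def using assms finite_path[of i] by (auto intro: Max0_submodular)
next
  case False
  then have "p i \<inter> (X \<union> {e}) = p i \<inter> X" for X by auto
  then show ?thesis unfolding loss_def by simp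
qed

lemma Lambda_val_submodular:
  assumes "A \<subseteq> B"
  shows "Lambda_val E C \<gamma> k p lam (B \<union> {e}) - Lambda_val E C \<gamma> k p lam B
    \<le> Lambda_val E C \<gamma> k p lam (A \<union> {e}) - Lambda_val E C \<gamma> k p lam A"
  unfolding Lambda_val_eq_sum_loss sum_subtractf[symmetric]
  using loss_submodular[OF assms] by (intro sum_mono) auto

end

theorem lemma1:
  fixes E :: "('v \<times> 'v) set" and C :: "'v \<times> 'v \<Rightarrow> real" and \<gamma> :: real
    and k :: nat and p :: "nat \<Rightarrow> ('v \<times> 'v) set" and lam :: "nat \<Rightarrow> real"
  assumes finE: "finite E"
    and dag: "acyclic E"
    and cap_nonneg: "\<forall>e \<in> E. 0 \<le> C e"
    and gamma_pos: "0 < \<gamma>"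
    and gamma_le: "\<forall>e \<in> E. \<gamma> \<le> C e"
    and paths: "\<forall>i < k. is_dpath E (p i)"
    and lam_nonneg: "\<forall>i < k. 0 \<le> lam i"
    and lam_feas: "\<forall>e \<in> E. (\<Sum>i \<in> {i. i < k \<and> e \<in> p i}. lam i) \<le> C e"
    and disjoint: "\<forall>i < k. \<forall>j < k. i \<noteq> j \<longrightarrow> p i \<inter> p j = {}"
  shows "(\<forall>A B. A \<subseteq> B \<and> B \<subseteq> E \<longrightarrow>
            Lambda_val E C \<gamma> k p lam A \<le> Lambda_val E C \<gamma> k p lam B)
       \<and> (\<forall>A B e. A \<subseteq> B \<and> B \<subseteq> E \<and> e \<in> E \<longrightarrow>
            Lambda_val E C \<gamma> k p lam (A \<union> {e}) - Lambda_val E C \<gamma> k p lam A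
              \<ge> Lambda_val E C \<gamma> k p lam (B \<union> {e}) - Lambda_val E C \<gamma> k p lam B)"
proof -
  have "p i \<subseteq> E" if "i < k" for i
    using paths that by (simp add: is_dpath_subset)
  then interpret disjoint_paths_network E C \<gamma> k p lam
    using finE cap_nonneg gamma_le lam_nonneg lam_feas disjoint by unfold_locales auto
  show ?thesis using Lambda_val_mono Lambda_val_submodular by auto
qed

end
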